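(* Let $f:\mathbb{Z}^n\to\mathbb{R}\cup\{+\infty\}$ be M-convex and $y\in\operatorname{dom} f$ with $\phi(y)<0$. Let $i\in N$ satisfy $f'(y;i,j)>\phi(y)$ for every $j\in N\setminus\{i\}$, and let $h,k\in N$ be distinct with $f'(y;h,k)=\phi(y)$. Then $f'(y+\chi_h-\chi_k;i,j)>\phi(y)$ for every $j\in N\setminus\{i\}$.
   Context: $N=\{1,\dots,n\}$; $\chi_i\in\{0,1\}^n$ is the $i$-th unit vector. For $f:\mathbb{Z}^n\to\mathbb{R}\cup\{+\infty\}$, $\operatorname{dom} f=\{x\in\mathbb{Z}^n: f(x)<+\infty\}$. $f$ is M-convex if $\operatorname{dom} f\neq\emptyset$ and for all $x,y\in\operatorname{dom} f$ and every $i$ with $x(i)>y(i)$ there is $j$ with $x(j)<y(j)$ such that $f(x)+f(y)\ge f(x-\chi_i+\chi_j)+f(y+\chi_i-\chi_j)$. For $x\in\operatorname{dom} f$ and $i,j\in N$, $f'(x;i,j)=f(x+\chi_i-\chi_j)-f(x)$ (possibly $+\infty$; $f'(x;i,i)=0$), and $\phi(x)=\min_{i,j\in N}f'(x;i,j)$. *)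

theory Defs
  imports "HOL-Analysis.Analysis"
begin

text \<open>The ground set N is modelled by a finite type 'a (so n = CARD('a)), points of Z^n are
functions 'a => int, and R \<union> {+\<infinity>} is modelled by ereal together with the explicit
requirement that f never takes the value -\<infinity>.\<close>

definition unitv :: "'a \<Rightarrow> ('a \<Rightarrow> int)" where
  "unitv i = (\<lambda>k. if k = i then 1 else 0)"

definition dom_f :: "(('a \<Rightarrow> int) \<Rightarrow> ereal) \<Rightarrow> ('a \<Rightarrow> int) set" where
  "dom_f f = {x. f x < \<infinity>}"

definition M_convex :: "(('a \<Rightarrow> int) \<Rightarrow> ereal) \<Rightarrow> bool" where
  "M_convex f \<longleftrightarrow> dom_f f \<noteq> {} \<and>
     (\<forall>x\<in>dom_f f. \<forall>y\<in>dom_f f. \<forall>i. x i > y i \<longrightarrow>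
        (\<exists>j. x j < y j \<and>
           f x + f y \<ge> f (\<lambda>l. x l - unitv i l + unitv j l) + f (\<lambda>l. y l + unitv i l - unitv j l)))"

definition fder :: "(('a \<Rightarrow> int) \<Rightarrow> ereal) \<Rightarrow> ('a \<Rightarrow> int) \<Rightarrow> 'a \<Rightarrow> 'a \<Rightarrow> ereal" where
  "fder f x i j = f (\<lambda>l. x l + unitv i l - unitv j l) - f x"

definition phi :: "(('a::finite \<Rightarrow> int) \<Rightarrow> ereal) \<Rightarrow> ('a \<Rightarrow> int) \<Rightarrow> ereal" where
  "phi f x = Min {fder f x i j | i j. True}"

end

theory Submission
  imports Defs
begin

text \<open>Write y' = y + \<chi>h - \<chi>k, so f(y') = f(y) + \<phi>(y), and z = y' + \<chi>i - \<chi>j. The claim is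
f(z) > f(y) + 2\<phi>(y). If i = k or h = j, then z is y itself or a single exchange of y, so
f(z) \<ge> f(y) + \<phi>(y) > f(y) + 2\<phi>(y) as \<phi>(y) < 0. Otherwise z(i) > y(i), and the exchange
axiom for z, y and i yields b \<in> {j, k} with f(z) + f(y) \<ge> f(z - \<chi>i + \<chi>b) + f(y + \<chi>i - \<chi>b).
Both points on the right are exchanges of y, and the second one moves i, so the right-hand
side exceeds 2f(y) + 2\<phi>(y).\<close>

definition move :: "('a \<Rightarrow> int) \<Rightarrow> 'a \<Rightarrow> 'a \<Rightarrow> ('a \<Rightarrow> int)" where
  "move x a b = (\<lambda>l. x l + unitv a l - unitv b l)"

lemma fder_move: "fder f x a b = f (move x a b) - f x"
  unfolding fder_def move_def ..

lemma move_self [simp]: "move x a a = x"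
  unfolding move_def by simp

lemma M_convexD:
  assumes "M_convex f" "x \<in> dom_f f" "y \<in> dom_f f" "x i > y i"
  obtains j where "x j < y j" and "f (move x j i) + f (move y i j) \<le> f x + f y"
proof -
  have "move x j i = (\<lambda>l. x l - unitv i l + unitv j l)" for j
    unfolding move_def by (auto simp: algebra_simps)
  then show ?thesis
    using assms that unfolding M_convex_def move_def[of y] by fastforce
qed

lemma finite_fder_values:
  fixes f :: "('a::finite \<Rightarrow> int) \<Rightarrow> ereal"
  shows "finite {fder f x i j | i j. True}"
proof -
  have "{fder f x i j | i j. True} = (\<lambda>(i, j). fder f x i j) ` UNIV" by auto
  then show ?thesis by simp
qed

lemma phi_le_fder:
  fixes f :: "('a::finite \<Rightarrow> int) \<Rightarrow> ereal"
  shows "phi f x \<le> fder f x a b"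
  unfolding phi_def by (rule Min_le[OF finite_fder_values]) auto

lemma phi_attained:
  fixes f :: "('a::finite \<Rightarrow> int) \<Rightarrow> ereal"
  obtains a b where "phi f x = fder f x a b"
proof -
  have "phi f x \<in> {fder f x i j | i j. True}"
    unfolding phi_def by (rule Min_in[OF finite_fder_values]) auto
  with that show ?thesis by blast
qed

lemma phi_real:
  fixes f :: "('a::finite \<Rightarrow> int) \<Rightarrow> ereal"
  assumes "\<forall>x. f x \<noteq> -\<infinity>" and "f y = ereal c"
  obtains p where "phi f y = ereal p"
proof -
  obtain a b where ab: "phi f y = fder f y a b" by (rule phi_attained)
  have "phi f y \<noteq> -\<infinity>"
    using ab assms by (cases "f (move y a b)") (auto simp: fder_move)
  moreover have "phi f y \<le> 0"
    using phi_le_fder[of f y a a] assms(2) by (simp add: fder_move)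
  ultimately show ?thesis
    using that by (cases "phi f y") auto
qed

lemma move_value_ge:
  assumes "f y = ereal c" and "ereal p \<le> fder f y a b"
  shows "ereal (c + p) \<le> f (move y a b)"
  using assms by (cases "f (move y a b)") (auto simp: fder_move)

lemma move_value_gt:
  assumes "f y = ereal c" and "ereal p < fder f y a b"
  shows "ereal (c + p) < f (move y a b)"
  using assms by (cases "f (move y a b)") (auto simp: fder_move)

lemma double_move_value_gt:
  fixes f :: "('a::finite \<Rightarrow> int) \<Rightarrow> ereal"
  assumes Mconv: "M_convex f"
    and c: "f y = ereal c" and p: "phi f y = ereal p" and neg: "p < 0"
    and hi: "\<forall>j. j \<noteq> i \<longrightarrow> fder f y i j > phi f y"
    and ji: "j \<noteq> i"
  shows "ereal (c + 2 * p) < f (move (move y h k) i j)"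
    (is "_ < f ?z")
proof -
  have ge: "ereal (c + p) \<le> f (move y a b)" for a b
    using move_value_ge[of f y c p a b] c phi_le_fder[of f y a b] p by simp
  have gt: "ereal (c + p) < f (move y i b)" if "b \<noteq> i" for b
    using move_value_gt[of f y c p i b] c hi that p by simp
  have below: "ereal (c + 2 * p) < ereal (c + p)"
    using neg by simp
  consider "i = k" | "h = j" | "i \<noteq> k" "h \<noteq> j" by blast
  then show ?thesis
  proof cases
    case 1
    then have "?z = move y h j" by (auto simp: move_def unitv_def)
    then show ?thesis using ge[of h j] below by (metis order_less_le_trans)
  next
    case 2
    then have "?z = move y i k" by (auto simp: move_def unitv_def)
    then show ?thesis using ge[of i k] below by (metis order_less_le_trans)
  next
    case 3
    show ?thesis
    proof (cases "f ?z = \<infinity>")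
      case False
      then have zdom: "?z \<in> dom_f f"
        unfolding dom_f_def by (simp add: top.not_eq_extremum)
      have ydom: "y \<in> dom_f f" using c unfolding dom_f_def by simp
      have "?z i > y i" using 3 ji by (auto simp: move_def unitv_def)
      then obtain b where b: "?z b < y b"
        and exch: "f (move ?z b i) + f (move y i b) \<le> f ?z + f y"
        using M_convexD[OF Mconv zdom ydom] by blast
      have "b = j \<or> b = k" using b by (auto simp: move_def unitv_def split: if_splits)
      then have "move ?z b i = move y h k \<and> b \<noteq> i \<or> move ?z b i = move y h j \<and> b \<noteq> i"
        using 3 ji by (auto simp: move_def unitv_def)
      then have "ereal (c + p) \<le> f (move ?z b i)" and "ereal (c + p) < f (move y i b)"
        using ge gt by auto
      then have "ereal (2 * c + 2 * p) < f (move ?z b i) + f (move y i b)"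
        by (cases "f (move ?z b i)"; cases "f (move y i b)") auto
      with exch have "ereal (2 * c + 2 * p) < f ?z + f y" by order
      with c show ?thesis
        by (cases "f ?z") auto
    qed simp
  qed
qed

theorem mainTheorem3:
  fixes f :: "('a::finite \<Rightarrow> int) \<Rightarrow> ereal" and y :: "'a \<Rightarrow> int" and i h k :: 'a
  assumes range: "\<forall>x. f x \<noteq> -\<infinity>"
    and Mconv: "M_convex f"
    and ydom: "y \<in> dom_f f"
    and neg: "phi f y < 0"
    and hi: "\<forall>j. j \<noteq> i \<longrightarrow> fder f y i j > phi f y"
    and hk: "h \<noteq> k"
    and hkmin: "fder f y h k = phi f y"
  shows "\<forall>j. j \<noteq> i \<longrightarrow> fder f (\<lambda>l. y l + unitv h l - unitv k l) i j > phi f y"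
proof (intro allI impI)
  fix j assume ji: "j \<noteq> i"
  obtain c where c: "f y = ereal c"
    using ydom range unfolding dom_f_def by (cases "f y") auto
  obtain p where p: "phi f y = ereal p"
    using phi_real[OF range c] .
  have y': "f (move y h k) = ereal (c + p)"
    using hkmin c p by (cases "f (move y h k)") (auto simp: fder_move)
  have "ereal (c + 2 * p) < f (move (move y h k) i j)"
    using double_move_value_gt[OF Mconv c p _ hi ji] neg p by simp
  then show "fder f (\<lambda>l. y l + unitv h l - unitv k l) i j > phi f y"
    using y' p by (cases "f (move (move y h k) i j)") (auto simp: fder_move move_def[symmetric])
qed

end
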